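(* (Stability condition for D-GLDPC codes.) Consider a D-GLDPC ensemble on the BEC with channel erasure probability $q\in[0,1]$, whose variable node decoder has EXIT function $$I_{E,V}(p,q)=\sum_{j\ge2}\lambda^{(\mathrm r)}_j(1-q\,p^{j-1})+\sum_i\lambda_iI^{(i)}_{E,V}(p,q),$$ where each $I^{(i)}_{E,V}$ is the variable-node EXIT function (for a fixed generator matrix $\mathbf{G}^{(i)}_V$) of an $(n_i,k_i)$ binary linear code $\mathcal{V}_i$ with $d_{\min}(\mathcal{V}_i)\ge2$, and whose check node decoder is as in the context, with all check component codes $\mathcal{C}_i$ of minimum distance at least $2$. Let $D_C$ be as in the context and assume $D_C>0$. Then $$-\frac{\partial I_{E,V}(p,q)}{\partial p}\Big|_{p=0}=q\lambda^{(\mathrm r)}_2+\sum_{i:\,d_{\min}(\mathcal{V}_i)=2}\ \sum_{z=0}^{k_i}q^z(1-q)^{k_i-z}\frac{2\lambda_i}{n_i}\Delta^{(i)}_{n_i-2,k_i-z},$$ so the stability condition $-\frac{\partial I_{E,V}}{\partial p}\big|_{p=0}\le D_C^{-1}$ reads $$q\lambda^{(\mathrm r)}_2+\sum_{i:\,d_{\min}(\mathcal{V}_i)=2}\sum_{z=0}^{k_i}q^z(1-q)^{k_i-z}\frac{2\lambda_i\Delta^{(i)}_{n_i-2,k_i-z}}{n_i}\le\Big[\rho'_{\mathrm{SPC}}(1)+\sum_{i:\,d_{\min}(\mathcal{C}_i)=2}\frac{2\rho_i}{n_i}\Delta^{(i)}_{n_i-2}\Big]^{-1}.$$ In particular, if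 every generalized variable component code $\mathcal{V}_i$ has $d_{\min}\ge3$ and $\lambda^{(\mathrm r)}_2>0$, the stability condition is equivalent to $q\le[\lambda^{(\mathrm r)}_2D_C]^{-1}$ (with equality in the stability condition iff $q=[\lambda^{(\mathrm r)}_2D_C]^{-1}$), and if moreover all generalized check component codes have $d_{\min}\ge3$, it is equivalent to $q\le[\lambda^{(\mathrm r)}_2\rho'_{\mathrm{SPC}}(1)]^{-1}$.
   Context: Edge fractions $\lambda^{(\mathrm r)}_j,\lambda_i\ge0$ sum to $1$; $\rho^{(\mathrm{SPC})}_j,\rho_i\ge0$ sum to $1$. Check node decoder EXIT function: $I_{E,C}(p)=\sum_{j\ge2}\rho^{(\mathrm{SPC})}_j(1-p)^{j-1}+\sum_i\rho_iI^{(i)}_{E,C}(p)$, where for an $(n,k)$ check code with generator matrix $\mathbf{G}$ (rank $k$), $I_{E}(p)=1-\frac1n\sum_{t=0}^{n-1}a_tp^t(1-p)^{n-t-1}$, $a_t=(n-t)\tilde e_{n-t}-(t+1)\tilde e_{n-t-1}$, $\tilde e_g=\sum_{|S|=g}\operatorname{rank}(\mathbf{G}_S)$ over $g$-element column sets. $\rho'_{\mathrm{SPC}}(1)=\sum_j(j-1)\rho^{(\mathrm{SPC})}_j$, $\Delta^{(i)}_{n_i-2}=\sum_{|S|=n_i-2}(k_i-\operatorname{rank}(\mathbf{G}^{(i)}_S))$ for a generator matrix of $\mathcal{C}_i$, and $D_C=\rho'_{\mathrm{SPC}}(1)+\sum_{i:\,d_{\min}(\mathcal{C}_i)=2}\frac{2\rho_i}{n_i}\Delta^{(i)}_{n_i-2}$.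 For an $(n,k)$ variable code with generator matrix $\mathbf{G}$ and $\mathbf{I}_k$ the identity: $\tilde e_{g,h}=\sum_{S,T}\operatorname{rank}[\mathbf{G}_S|(\mathbf{I}_k)_T]$ over $g$-element column sets $S$ of $\mathbf{G}$ and $h$-element column sets $T$ of $\mathbf{I}_k$; $a_{t,z}=(n-t)\tilde e_{n-t,k-z}-(t+1)\tilde e_{n-t-1,k-z}$; variable-node EXIT function $I_E(p,q)=1-\frac1n\sum_{t=0}^{n-1}\sum_{z=0}^ka_{t,z}p^t(1-p)^{n-t-1}q^z(1-q)^{k-z}$; and $\Delta_{n-2,k-z}=\sum_{S,T}(k-\operatorname{rank}[\mathbf{G}_S|(\mathbf{I}_k)_T])$ over $(n-2)$-element $S$ and $(k-z)$-element $T$. $\Delta^{(i)}_{n_i-2,k_i-z}$ is this quantity for $\mathbf{G}^{(i)}_V$. *)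

theory Defs
  imports "HOL-Analysis.Analysis"
begin

text \<open>A binary matrix is a function G :: nat => nat => bool, G i j being the
entry in row i (i < k) and column j (j < n); True encodes 1 in GF(2).
A family of vectors of GF(2)^k is given by v :: 'a => nat => bool (v a i is
the i-th coordinate of vector a, i < k).\<close>

text \<open>Linear independence over GF(2): no nonempty subfamily sums to zero.\<close>
definition gf2_indep :: "nat \<Rightarrow> ('a \<Rightarrow> nat \<Rightarrow> bool) \<Rightarrow> 'a set \<Rightarrow> bool" where
  "gf2_indep k v U \<longleftrightarrow>
     (\<forall>W\<subseteq>U. W \<noteq> {} \<longrightarrow> (\<exists>i<k. odd (card {a\<in>W. v a i})))"

definition gf2_rank :: "nat \<Rightarrow> ('a \<Rightarrow> nat \<Rightarrow> bool) \<Rightarrow> 'a set \<Rightarrow> nat" where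
  "gf2_rank k v A = Max (card ` {U. U \<subseteq> A \<and> gf2_indep k v U})"

definition gcol :: "(nat \<Rightarrow> nat \<Rightarrow> bool) \<Rightarrow> nat \<Rightarrow> nat \<Rightarrow> bool" where
  "gcol G j i = G i j"

definition rank_sub :: "nat \<Rightarrow> (nat \<Rightarrow> nat \<Rightarrow> bool) \<Rightarrow> nat set \<Rightarrow> nat" where
  "rank_sub k G S = gf2_rank k (gcol G) S"

text \<open>Columns of the augmented matrix [G | I_k]: Inl j is column j of G,
Inr t is column t of the k x k identity.\<close>
definition aug_col :: "(nat \<Rightarrow> nat \<Rightarrow> bool) \<Rightarrow> nat + nat \<Rightarrow> nat \<Rightarrow> bool" where
  "aug_col G c i = (case c of Inl j \<Rightarrow> G i j | Inr t \<Rightarrow> i = t)"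

definition rank_aug :: "nat \<Rightarrow> (nat \<Rightarrow> nat \<Rightarrow> bool) \<Rightarrow> nat set \<Rightarrow> nat set \<Rightarrow> nat" where
  "rank_aug k G S T = gf2_rank k (aug_col G) (Inl ` S \<union> Inr ` T)"

definition is_gen_matrix :: "nat \<Rightarrow> nat \<Rightarrow> (nat \<Rightarrow> nat \<Rightarrow> bool) \<Rightarrow> bool" where
  "is_gen_matrix k n G \<longleftrightarrow> 0 < k \<and> rank_sub k G {..<n} = k"

text \<open>Codeword u G for the message with support U (subset of {..<k}).\<close>
definition codeword :: "(nat \<Rightarrow> nat \<Rightarrow> bool) \<Rightarrow> nat set \<Rightarrow> nat \<Rightarrow> bool" where
  "codeword G U j = odd (card {i\<in>U. G i j})"

definition dmin :: "nat \<Rightarrow> nat \<Rightarrow> (nat \<Rightarrow> nat \<Rightarrow> bool) \<Rightarrow> nat" where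
  "dmin k n G = Min {card {j\<in>{..<n}. codeword G U j} | U.
                      U \<subseteq> {..<k} \<and> (\<exists>j<n. codeword G U j)}"

definition subsets_of_card :: "nat \<Rightarrow> nat \<Rightarrow> nat set set" where
  "subsets_of_card n g = {S. S \<subseteq> {..<n} \<and> card S = g}"

definition etilde :: "nat \<Rightarrow> nat \<Rightarrow> (nat \<Rightarrow> nat \<Rightarrow> bool) \<Rightarrow> nat \<Rightarrow> real" where
  "etilde k n G g = (\<Sum>S\<in>subsets_of_card n g. real (rank_sub k G S))"

definition IEC_code :: "nat \<Rightarrow> nat \<Rightarrow> (nat \<Rightarrow> nat \<Rightarrow> bool) \<Rightarrow> real \<Rightarrow> real" where
  "IEC_code k n G p = 1 - 1 / real n * (\<Sum>t<n.
      (real (n - t) * etilde k n G (n - t) - real (t + 1) * etilde k n G (n - t - 1))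
      * p ^ t * (1 - p) ^ (n - t - 1))"

definition DeltaC :: "nat \<Rightarrow> nat \<Rightarrow> (nat \<Rightarrow> nat \<Rightarrow> bool) \<Rightarrow> nat \<Rightarrow> real" where
  "DeltaC k n G g = (\<Sum>S\<in>subsets_of_card n g. real k - real (rank_sub k G S))"

definition rho_SPC_deriv :: "nat \<Rightarrow> (nat \<Rightarrow> real) \<Rightarrow> real" where
  "rho_SPC_deriv Jc rhoS = (\<Sum>j=2..Jc. real (j - 1) * rhoS j)"

text \<open>D_C for check components i < NC with length nC i, dimension kC i,
generator matrix GC i and edge fraction rhoC i.\<close>
definition D_C :: "nat \<Rightarrow> (nat \<Rightarrow> real) \<Rightarrow> nat \<Rightarrow> (nat \<Rightarrow> nat) \<Rightarrow> (nat \<Rightarrow> nat)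
    \<Rightarrow> (nat \<Rightarrow> nat \<Rightarrow> nat \<Rightarrow> bool) \<Rightarrow> (nat \<Rightarrow> real) \<Rightarrow> real" where
  "D_C Jc rhoS NC nC kC GC rhoC =
     rho_SPC_deriv Jc rhoS +
     (\<Sum>i\<in>{i. i < NC \<and> dmin (kC i) (nC i) (GC i) = 2}.
        2 * rhoC i / real (nC i) * DeltaC (kC i) (nC i) (GC i) (nC i - 2))"

definition etilde2 :: "nat \<Rightarrow> nat \<Rightarrow> (nat \<Rightarrow> nat \<Rightarrow> bool) \<Rightarrow> nat \<Rightarrow> nat \<Rightarrow> real" where
  "etilde2 k n G g h = (\<Sum>S\<in>subsets_of_card n g. \<Sum>T\<in>subsets_of_card k h.
      real (rank_aug k G S T))"

definition a_tz :: "nat \<Rightarrow> nat \<Rightarrow> (nat \<Rightarrow> nat \<Rightarrow> bool) \<Rightarrow> nat \<Rightarrow> nat \<Rightarrow> real" where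
  "a_tz k n G t z = real (n - t) * etilde2 k n G (n - t) (k - z)
                    - real (t + 1) * etilde2 k n G (n - t - 1) (k - z)"

definition IEV_code :: "nat \<Rightarrow> nat \<Rightarrow> (nat \<Rightarrow> nat \<Rightarrow> bool) \<Rightarrow> real \<Rightarrow> real \<Rightarrow> real" where
  "IEV_code k n G p q = 1 - 1 / real n * (\<Sum>t<n. \<Sum>z\<le>k.
      a_tz k n G t z * p ^ t * (1 - p) ^ (n - t - 1) * q ^ z * (1 - q) ^ (k - z))"

definition DeltaV :: "nat \<Rightarrow> nat \<Rightarrow> (nat \<Rightarrow> nat \<Rightarrow> bool) \<Rightarrow> nat \<Rightarrow> nat \<Rightarrow> real" where
  "DeltaV k n G g h = (\<Sum>S\<in>subsets_of_card n g. \<Sum>T\<in>subsets_of_card k h.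
      real k - real (rank_aug k G S T))"

text \<open>EXIT function of the D-GLDPC variable node decoder: repetition codes of
degrees j in {2..Jv} with edge fractions lamr j, and generalized variable
components i < NV with length nV i, dimension kV i, generator matrix GV i and
edge fraction lamV i.\<close>
definition IEV_ens :: "nat \<Rightarrow> (nat \<Rightarrow> real) \<Rightarrow> nat \<Rightarrow> (nat \<Rightarrow> nat) \<Rightarrow> (nat \<Rightarrow> nat)
    \<Rightarrow> (nat \<Rightarrow> nat \<Rightarrow> nat \<Rightarrow> bool) \<Rightarrow> (nat \<Rightarrow> real) \<Rightarrow> real \<Rightarrow> real \<Rightarrow> real" where
  "IEV_ens Jv lamr NV nV kV GV lamV p q =
     (\<Sum>j=2..Jv. lamr j * (1 - q * p ^ (j - 1))) +
     (\<Sum>i<NV. lamV i * IEV_code (kV i) (nV i) (GV i) p q)"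

end

theory Submission
  imports Defs
begin

text \<open>Only the coefficients \<open>a_{0,z}\<close> and \<open>a_{1,z}\<close> of the expansion of \<open>I_E(p,q)\<close>
  in the basis \<open>p^t (1-p)^{n-t-1}\<close> contribute to the derivative at \<open>p = 0\<close>. The binomial
  weights in \<open>e_{g,h}\<close> cancel, leaving
  \<open>a_{t,z} = (t+1) \<Delta>_{n-t-1,k-z} - (n-t) \<Delta>_{n-t,k-z}\<close>.
  Over GF(2), any \<open>n - d_min + 1\<close> columns of a generator matrix have rank \<open>k\<close>: a nonzero dual
  vector orthogonal to them would be a message whose codeword has weight below \<open>d_min\<close>.
  Hence \<open>\<Delta>_{g,h} = 0\<close> whenever \<open>n - g < d_min\<close>, so \<open>a_{0,z} = 0\<close>,
  \<open>a_{1,z} = 2 \<Delta>_{n-2,k-z}\<close>, and \<open>\<Delta>_{n-2,h}\<close> vanishes unless \<open>d_min = 2\<close>.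
  The stability conditions are then rearrangements of a single inequality.\<close>

section \<open>Linear algebra over GF(2)\<close>

lemma odd_card_sym_diff:
  assumes "finite A" "finite B"
  shows "odd (card (sym_diff A B)) \<longleftrightarrow> odd (card A) \<noteq> odd (card B)"
proof -
  have "card (sym_diff A B) = card (A - B) + card (B - A)"
    using assms by (intro card_Un_disjoint) auto
  moreover have "card A = card (A \<inter> B) + card (A - B)" "card B = card (A \<inter> B) + card (B - A)"
    using assms card_Int_Diff[of A B] card_Int_Diff[of B A] by (simp_all add: Int_commute)
  ultimately have "card (sym_diff A B) + 2 * card (A \<inter> B) = card A + card B"
    by linarith
  then show ?thesis by (metis even_add even_mult_iff even_numeral)
qed

lemma odd_card_filter_sym_diff:
  assumes "finite A" "finite B"
  shows "odd (card {a \<in> sym_diff A B. P a}) \<longleftrightarrow>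
    odd (card {a\<in>A. P a}) \<noteq> odd (card {a\<in>B. P a})"
proof -
  have "{a \<in> sym_diff A B. P a} = sym_diff {a\<in>A. P a} {a\<in>B. P a}" by auto
  then show ?thesis using assms by (simp add: odd_card_sym_diff)
qed

text \<open>The sum over GF(2) of the vectors \<open>v a\<close>, \<open>a \<in> W\<close>, represented by its support.\<close>
definition gf2_sum :: "nat \<Rightarrow> ('a \<Rightarrow> nat \<Rightarrow> bool) \<Rightarrow> 'a set \<Rightarrow> nat set" where
  "gf2_sum k v W = {i. i < k \<and> odd (card {a\<in>W. v a i})}"

lemma gf2_indep_iff_gf2_sum:
  "gf2_indep k v U \<longleftrightarrow> (\<forall>W\<subseteq>U. W \<noteq> {} \<longrightarrow> gf2_sum k v W \<noteq> {})"
  by (auto simp: gf2_indep_def gf2_sum_def)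

lemma gf2_sum_subset: "gf2_sum k v W \<subseteq> {..<k}"
  by (auto simp: gf2_sum_def)

lemma gf2_sum_sym_diff:
  assumes "finite A" "finite B"
  shows "gf2_sum k v (sym_diff A B) = sym_diff (gf2_sum k v A) (gf2_sum k v B)"
  unfolding gf2_sum_def odd_card_filter_sym_diff[OF assms] by blast

lemma inj_on_gf2_sum:
  assumes "finite U" "gf2_indep k v U"
  shows "inj_on (gf2_sum k v) (Pow U)"
proof (rule inj_onI, rule ccontr)
  fix W1 W2 assume W: "W1 \<in> Pow U" "W2 \<in> Pow U" "gf2_sum k v W1 = gf2_sum k v W2" "W1 \<noteq> W2"
  have "finite W1" "finite W2" using W(1,2) assms(1) finite_subset by auto
  then have "gf2_sum k v (sym_diff W1 W2) = {}" using W(3) by (simp add: gf2_sum_sym_diff)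
  moreover have "sym_diff W1 W2 \<subseteq> U" "sym_diff W1 W2 \<noteq> {}" using W by auto
  ultimately show False using assms(2) by (auto simp: gf2_indep_iff_gf2_sum)
qed

lemma gf2_indep_card_le:
  assumes "finite U" "gf2_indep k v U"
  shows "card U \<le> k"
proof -
  have "(2::nat) ^ card U = card (gf2_sum k v ` Pow U)"
    using assms by (simp add: card_image inj_on_gf2_sum card_Pow)
  also have "\<dots> \<le> card (Pow {..<k})"
    using gf2_sum_subset by (intro card_mono) auto
  finally show ?thesis by (simp add: card_Pow)
qed

lemma gf2_sum_image_Pow:
  assumes "finite U" "gf2_indep k v U" "card U = k"
  shows "gf2_sum k v ` Pow U = Pow {..<k}"
proof (rule card_subset_eq)
  show "gf2_sum k v ` Pow U \<subseteq> Pow {..<k}" using gf2_sum_subset by auto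
  show "card (gf2_sum k v ` Pow U) = card (Pow {..<k})"
    using assms by (simp add: card_image inj_on_gf2_sum card_Pow)
qed simp

text \<open>Bilinearity of the GF(2) inner product \<open>\<langle>U, x\<rangle> = |U \<inter> x| mod 2\<close>.\<close>
lemma odd_card_Int_gf2_sum:
  assumes "finite U" "finite W" "U \<subseteq> {..<k}"
  shows "odd (card (U \<inter> gf2_sum k v W)) \<longleftrightarrow> odd (card {a\<in>W. odd (card {i\<in>U. v a i})})"
proof -
  have "U \<inter> gf2_sum k v W = {i\<in>U. odd (card {a\<in>W. v a i})}"
    using assms(3) by (auto simp: gf2_sum_def)
  then have "even (card (U \<inter> gf2_sum k v W)) \<longleftrightarrow> even (\<Sum>i\<in>U. card {a\<in>W. v a i})"
    using assms(1) by (simp add: even_sum_iff)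
  also have "(\<Sum>i\<in>U. card {a\<in>W. v a i}) = (\<Sum>a\<in>W. card {i\<in>U. v a i})"
    using sum.swap_restrict[OF assms(1,2), of "\<lambda>_ _. 1::nat"] by simp
  also have "even \<dots> \<longleftrightarrow> even (card {a\<in>W. odd (card {i\<in>U. v a i})})"
    using assms(2) by (rule even_sum_iff)
  finally show ?thesis by simp
qed

lemma finite_card_gf2_indep_subsets:
  "finite A \<Longrightarrow> finite (card ` {U. U \<subseteq> A \<and> gf2_indep k v U})"
  by (rule finite_imageI, rule finite_subset[of _ "Pow A"]) auto

lemma gf2_rank_ge:
  "finite A \<Longrightarrow> U \<subseteq> A \<Longrightarrow> gf2_indep k v U \<Longrightarrow> card U \<le> gf2_rank k v A"
  unfolding gf2_rank_def by (rule Max_ge[OF finite_card_gf2_indep_subsets]) auto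

lemma gf2_rank_witness:
  assumes "finite A"
  obtains U where "U \<subseteq> A" "gf2_indep k v U" "card U = gf2_rank k v A"
proof -
  have "gf2_indep k v {}" by (simp add: gf2_indep_def)
  then have "gf2_rank k v A \<in> card ` {U. U \<subseteq> A \<and> gf2_indep k v U}"
    unfolding gf2_rank_def by (intro Max_in finite_card_gf2_indep_subsets[OF assms]) blast
  then obtain U where "U \<subseteq> A" "gf2_indep k v U" "gf2_rank k v A = card U" by blast
  then show ?thesis using that by simp
qed

lemma gf2_rank_le:
  assumes "finite A"
  shows "gf2_rank k v A \<le> k"
proof -
  obtain U where "U \<subseteq> A" "gf2_indep k v U" "card U = gf2_rank k v A"
    using gf2_rank_witness[OF assms] .
  then show ?thesis using gf2_indep_card_le[of U] finite_subset[OF _ assms] by simp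
qed

lemma gf2_rank_empty: "gf2_rank k v {} = 0"
  using gf2_rank_witness[of "{}" k v] by auto

lemma gf2_indep_image:
  assumes "inj_on f B"
  shows "gf2_indep k v (f ` B) \<longleftrightarrow> gf2_indep k (v \<circ> f) B"
proof -
  have card_eq: "card {a \<in> f ` W. v a i} = card {b\<in>W. (v \<circ> f) b i}" if "W \<subseteq> B" for W i
  proof -
    have "{a \<in> f ` W. v a i} = f ` {b\<in>W. (v \<circ> f) b i}" by auto
    then show ?thesis using inj_on_subset[OF assms that] by (simp add: card_image inj_on_subset)
  qed
  have "gf2_indep k v (f ` B) \<longleftrightarrow>
      (\<forall>W\<subseteq>B. f ` W \<noteq> {} \<longrightarrow> (\<exists>i<k. odd (card {a \<in> f ` W. v a i})))"
    unfolding gf2_indep_def subset_image_iff by blast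
  also have "\<dots> \<longleftrightarrow> gf2_indep k (v \<circ> f) B"
    unfolding gf2_indep_def by (simp add: card_eq)
  finally show ?thesis .
qed

lemma gf2_rank_image_le:
  assumes "finite A" "finite B" "inj_on f B" "f ` B \<subseteq> A"
  shows "gf2_rank k (v \<circ> f) B \<le> gf2_rank k v A"
proof -
  obtain U where U: "U \<subseteq> B" "gf2_indep k (v \<circ> f) U" "card U = gf2_rank k (v \<circ> f) B"
    using gf2_rank_witness[OF assms(2)] .
  have "gf2_indep k v (f ` U)"
    using U(1,2) assms(3) by (simp add: gf2_indep_image inj_on_subset)
  then have "card (f ` U) \<le> gf2_rank k v A"
    using U(1) assms(4) by (intro gf2_rank_ge[OF assms(1)]) auto
  then show ?thesis using U assms(3) by (simp add: card_image inj_on_subset)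
qed

lemma exists_orthogonal_vector:
  assumes "finite B" "card B < k"
  shows "\<exists>U\<subseteq>{..<k}. U \<noteq> {} \<and> (\<forall>b\<in>B. even (card {i\<in>U. v b i}))"
proof -
  define syndrome where "syndrome U = {b\<in>B. odd (card {i\<in>U. v b i})}" for U
  have "\<not> inj_on syndrome (Pow {..<k})"
  proof
    assume "inj_on syndrome (Pow {..<k})"
    then have "card (Pow {..<k}) \<le> card (Pow B)"
      using assms(1) by (intro card_inj_on_le[of syndrome]) (auto simp: syndrome_def)
    then show False using assms by (simp add: card_Pow)
  qed
  then obtain U1 U2 where U: "U1 \<subseteq> {..<k}" "U2 \<subseteq> {..<k}" "U1 \<noteq> U2" "syndrome U1 = syndrome U2"
    unfolding inj_on_def by blast
  then have "finite U1" "finite U2" by (auto intro: finite_subset)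
  have "even (card {i \<in> sym_diff U1 U2. v b i})" if "b \<in> B" for b
  proof -
    have "odd (card {i\<in>U1. v b i}) \<longleftrightarrow> odd (card {i\<in>U2. v b i})"
      using U(4) that unfolding syndrome_def by blast
    then show ?thesis
      using odd_card_filter_sym_diff[OF \<open>finite U1\<close> \<open>finite U2\<close>, of "\<lambda>i. v b i"] by blast
  qed
  moreover have "sym_diff U1 U2 \<subseteq> {..<k}" "sym_diff U1 U2 \<noteq> {}" using U by auto
  ultimately show ?thesis by blast
qed

lemma gf2_rank_less_imp_orthogonal:
  assumes A: "finite A" and rank: "gf2_rank k v A < k"
  shows "\<exists>U\<subseteq>{..<k}. U \<noteq> {} \<and> (\<forall>a\<in>A. even (card {i\<in>U. v a i}))"
proof -
  obtain B where B: "B \<subseteq> A" "gf2_indep k v B" "card B = gf2_rank k v A"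
    using gf2_rank_witness[OF A] .
  have "finite B" using B(1) A finite_subset by blast
  obtain U where U: "U \<subseteq> {..<k}" "U \<noteq> {}" "\<forall>b\<in>B. even (card {i\<in>U. v b i})"
    using exists_orthogonal_vector[OF \<open>finite B\<close>, of k v] rank B(3) by auto
  have "even (card {i\<in>U. v a i})" if a: "a \<in> A" "a \<notin> B" for a
  proof -
    have "\<not> gf2_indep k v (insert a B)"
      using gf2_rank_ge[OF A, of "insert a B" k v] a B \<open>finite B\<close> by auto
    then obtain W where W: "W \<subseteq> insert a B" "W \<noteq> {}" "gf2_sum k v W = {}"
      by (auto simp: gf2_indep_iff_gf2_sum)
    have "a \<in> W" using W B(2) by (auto simp: gf2_indep_iff_gf2_sum)
    have "finite W" "finite U" using W(1) \<open>finite B\<close> U(1) by (auto intro: finite_subset)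
    \<comment> \<open>\<open>v a\<close> is a sum of vectors from \<open>B\<close>, all orthogonal to \<open>U\<close>\<close>
    then have "even (card {x\<in>W. odd (card {i\<in>U. v x i})})"
      using odd_card_Int_gf2_sum[of U W k v] U(1) W(3) by simp
    moreover have "{x\<in>W. odd (card {i\<in>U. v x i})} \<subseteq> {a}" using W(1) U(3) by auto
    ultimately have "{x\<in>W. odd (card {i\<in>U. v x i})} = {}" by (auto dest!: subset_singletonD)
    then show ?thesis using \<open>a \<in> W\<close> by blast
  qed
  with U show ?thesis by blast
qed

section \<open>Column ranks of a generator matrix\<close>

lemma codeword_nonzero:
  assumes G: "is_gen_matrix k n G" and U: "U \<subseteq> {..<k}" "U \<noteq> {}"
  shows "\<exists>j<n. codeword G U j"
proof -
  obtain B where B: "B \<subseteq> {..<n}" "gf2_indep k (gcol G) B" "card B = k"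
    using gf2_rank_witness[of "{..<n}" k "gcol G"] G unfolding is_gen_matrix_def rank_sub_def
    by auto
  have "finite B" "finite U" using B(1) U(1) by (auto intro: finite_subset)
  obtain i0 where "i0 \<in> U" using U(2) by blast
  then have "{i0} \<in> gf2_sum k (gcol G) ` Pow B"
    using gf2_sum_image_Pow[OF \<open>finite B\<close> B(2,3)] U(1) by auto
  then obtain W where W: "W \<subseteq> B" "gf2_sum k (gcol G) W = {i0}" by blast
  then have "finite W" using \<open>finite B\<close> finite_subset by blast
  have "odd (card (U \<inter> gf2_sum k (gcol G) W))" using W(2) \<open>i0 \<in> U\<close> by simp
  then have "{a\<in>W. odd (card {i\<in>U. gcol G a i})} \<noteq> {}"
    using odd_card_Int_gf2_sum[OF \<open>finite U\<close> \<open>finite W\<close> U(1)] by force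
  then show ?thesis using W(1) B(1) by (auto simp: codeword_def gcol_def)
qed

lemma dmin_le_weight:
  assumes "U \<subseteq> {..<k}" "\<exists>j<n. codeword G U j"
  shows "dmin k n G \<le> card {j\<in>{..<n}. codeword G U j}"
  unfolding dmin_def
proof (rule Min_le)
  show "finite {card {j\<in>{..<n}. codeword G U j} |U. U \<subseteq> {..<k} \<and> (\<exists>j<n. codeword G U j)}"
    by (rule finite_image_set, rule finite_subset[of _ "Pow {..<k}"]) auto
qed (use assms in auto)

lemma rank_sub_eq_dim:
  assumes G: "is_gen_matrix k n G" and S: "S \<subseteq> {..<n}" and d: "n - card S < dmin k n G"
  shows "rank_sub k G S = k"
proof (rule ccontr)
  have "finite S" using S finite_subset by blast
  assume "rank_sub k G S \<noteq> k"
  then have "gf2_rank k (gcol G) S < k"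
    using gf2_rank_le[OF \<open>finite S\<close>, of k "gcol G"] unfolding rank_sub_def by linarith
  then obtain U where U: "U \<subseteq> {..<k}" "U \<noteq> {}" "\<forall>a\<in>S. even (card {i\<in>U. gcol G a i})"
    using gf2_rank_less_imp_orthogonal[OF \<open>finite S\<close>] by blast
  have "dmin k n G \<le> card {j\<in>{..<n}. codeword G U j}"
    using dmin_le_weight U(1) codeword_nonzero[OF G U(1,2)] by blast
  also have "\<dots> \<le> card ({..<n} - S)"
    using U(3) by (intro card_mono) (auto simp: codeword_def gcol_def)
  also have "\<dots> = n - card S" using S \<open>finite S\<close> by (simp add: card_Diff_subset)
  finally show False using d by simp
qed

lemma rank_aug_eq_dim:
  assumes "rank_sub k G S = k" "finite S" "finite T"
  shows "rank_aug k G S T = k"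
proof (rule antisym)
  show "rank_aug k G S T \<le> k" unfolding rank_aug_def using assms(2,3) by (intro gf2_rank_le) auto
  have "gf2_rank k (aug_col G \<circ> Inl) S \<le> gf2_rank k (aug_col G) (Inl ` S \<union> Inr ` T)"
    using assms(2,3) by (intro gf2_rank_image_le) auto
  moreover have "aug_col G \<circ> Inl = gcol G" by (simp add: fun_eq_iff aug_col_def gcol_def)
  ultimately show "k \<le> rank_aug k G S T"
    using assms(1) unfolding rank_sub_def rank_aug_def by simp
qed

lemma card_subsets_of_card: "card (subsets_of_card n g) = n choose g"
  unfolding subsets_of_card_def using n_subsets[of "{..<n}" g] by simp

lemma etilde2_eq_DeltaV:
  "etilde2 k n G g h = real (n choose g) * real (k choose h) * real k - DeltaV k n G g h"
  unfolding etilde2_def DeltaV_def by (simp add: sum_subtractf card_subsets_of_card)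

lemma DeltaV_eq_0:
  assumes G: "is_gen_matrix k n G" and d: "n - g < dmin k n G"
  shows "DeltaV k n G g h = 0"
  unfolding DeltaV_def
proof (intro sum.neutral ballI)
  fix S T assume S: "S \<in> subsets_of_card n g" and T: "T \<in> subsets_of_card k h"
  then have "finite S" "finite T" unfolding subsets_of_card_def by (auto intro: finite_subset)
  have "rank_sub k G S = k"
    using S d by (intro rank_sub_eq_dim[OF G]) (auto simp: subsets_of_card_def)
  then show "real k - real (rank_aug k G S T) = 0"
    using rank_aug_eq_dim \<open>finite S\<close> \<open>finite T\<close> by simp
qed

lemma length_ge_2:
  assumes G: "is_gen_matrix k n G" and d: "2 \<le> dmin k n G"
  shows "2 \<le> n"
proof (rule ccontr)
  assume "\<not> 2 \<le> n"
  then have "rank_sub k G {} = k" using d by (intro rank_sub_eq_dim[OF G]) auto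
  then show False using G unfolding is_gen_matrix_def rank_sub_def by (simp add: gf2_rank_empty)
qed

text \<open>Uses \<open>(n-t) C(n,n-t) = (t+1) C(n,n-t-1)\<close>.\<close>
lemma a_tz_eq_DeltaV:
  assumes "t < n"
  shows "a_tz k n G t z =
    real (t + 1) * DeltaV k n G (n - t - 1) (k - z) - real (n - t) * DeltaV k n G (n - t) (k - z)"
proof -
  have "n choose (n - t) = n choose t" "n choose (n - t - 1) = n choose (t + 1)"
    using assms binomial_symmetric[of t n] binomial_symmetric[of "t + 1" n] by auto
  moreover obtain b where "n = Suc (t + b)" using assms less_imp_Suc_add by blast
  then have "Suc t * (n choose Suc t) = (n - t) * (n choose t)"
    using Suc_times_binomial_add[of t b] by simp
  ultimately have binom:
      "real (n - t) * real (n choose (n - t)) = real (t + 1) * real (n choose (n - t - 1))"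
    by (metis of_nat_mult plus_1_eq_Suc add.commute)
  have "a_tz k n G t z =
      (real (n - t) * real (n choose (n - t)) - real (t + 1) * real (n choose (n - t - 1)))
        * (real (k choose (k - z)) * real k)
      + (real (t + 1) * DeltaV k n G (n - t - 1) (k - z)
         - real (n - t) * DeltaV k n G (n - t) (k - z))"
    unfolding a_tz_def etilde2_eq_DeltaV by (simp add: algebra_simps)
  then show ?thesis unfolding binom by simp
qed

lemma a_tz_0:
  assumes G: "is_gen_matrix k n G" and d: "2 \<le> dmin k n G"
  shows "a_tz k n G 0 z = 0"
proof -
  have "0 < n" using length_ge_2[OF G d] by simp
  moreover have "DeltaV k n G (n - 1) (k - z) = 0" "DeltaV k n G n (k - z) = 0"
    using d \<open>0 < n\<close> by (auto intro!: DeltaV_eq_0[OF G])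
  ultimately show ?thesis using a_tz_eq_DeltaV[of 0 n k G z] by simp
qed

lemma a_tz_1:
  assumes G: "is_gen_matrix k n G" and d: "2 \<le> dmin k n G"
  shows "a_tz k n G 1 z = 2 * DeltaV k n G (n - 2) (k - z)"
proof -
  have "1 < n" using length_ge_2[OF G d] by simp
  moreover have "DeltaV k n G (n - 1) (k - z) = 0"
    using d \<open>1 < n\<close> by (intro DeltaV_eq_0[OF G]) simp
  ultimately show ?thesis using a_tz_eq_DeltaV[of 1 n k G z] by (simp add: numeral_2_eq_2)
qed

section \<open>Slope of the variable-node EXIT function at the origin\<close>

lemma DERIV_monomial_one_minus_at_0:
  "((\<lambda>p::real. c * p ^ t * (1 - p) ^ m) has_real_derivative
     (if t = 0 then - (c * real m) else if t = 1 then c else 0)) (at 0)"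
proof (cases t)
  case 0
  then show ?thesis by (auto intro!: derivative_eq_intros)
next
  case (Suc s)
  then show ?thesis by (cases s) (auto intro!: derivative_eq_intros)
qed

lemma DERIV_bernstein_form_at_0:
  assumes "2 \<le> n"
  shows "((\<lambda>p::real. \<Sum>t<n. c t * p ^ t * (1 - p) ^ (n - t - 1)) has_real_derivative
     c 1 - real (n - 1) * c 0) (at 0)"
proof -
  have "((\<lambda>p::real. \<Sum>t<n. c t * p ^ t * (1 - p) ^ (n - t - 1)) has_real_derivative
     (\<Sum>t<n. (if t = 0 then - (c t * real (n - t - 1)) else 0) + (if t = 1 then c t else 0))) (at 0)"
    by (rule DERIV_sum, rule DERIV_cong[OF DERIV_monomial_one_minus_at_0]) auto
  moreover have
    "(\<Sum>t<n. (if t = 0 then - (c t * real (n - t - 1)) else 0) + (if t = 1 then c t else 0))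
     = c 1 - real (n - 1) * c 0"
    using assms by (simp add: sum.distrib)
  ultimately show ?thesis by simp
qed

lemma IEV_code_has_derivative_at_0:
  assumes G: "is_gen_matrix k n G" and d: "2 \<le> dmin k n G"
  shows "((\<lambda>p. IEV_code k n G p q) has_real_derivative
     - (\<Sum>z\<le>k. q ^ z * (1 - q) ^ (k - z) * (2 / real n) * DeltaV k n G (n - 2) (k - z))) (at 0)"
proof -
  define c where "c t = (\<Sum>z\<le>k. a_tz k n G t z * q ^ z * (1 - q) ^ (k - z))" for t
  have IEV: "IEV_code k n G p q =
      1 - 1 / real n * (\<Sum>t<n. c t * p ^ t * (1 - p) ^ (n - t - 1))" for p
    unfolding IEV_code_def c_def by (simp add: sum_distrib_left sum_distrib_right mult_ac)
  have "c 0 = 0" unfolding c_def by (simp add: a_tz_0[OF G d])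
  have c1: "c 1 = (\<Sum>z\<le>k. q ^ z * (1 - q) ^ (k - z) * 2 * DeltaV k n G (n - 2) (k - z))"
    unfolding c_def a_tz_1[OF G d] by (simp add: mult_ac)
  have "((\<lambda>p. IEV_code k n G p q) has_real_derivative
      0 - 1 / real n * (c 1 - real (n - 1) * c 0)) (at 0)"
    unfolding IEV
    by (intro DERIV_diff DERIV_const DERIV_cmult DERIV_bernstein_form_at_0 length_ge_2[OF G d])
  then show ?thesis
    unfolding \<open>c 0 = 0\<close> c1 by (simp add: sum_distrib_left mult_ac)
qed

lemma DERIV_repetition_part_at_0:
  assumes "\<forall>j. j \<notin> {2..J} \<longrightarrow> lam j = 0"
  shows "((\<lambda>p. \<Sum>j=2..J. lam j * (1 - q * p ^ (j - 1))) has_real_derivative - (q * lam 2)) (at 0)"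
proof -
  have "((\<lambda>p. \<Sum>j=2..J. lam j * (1 - q * p ^ (j - 1))) has_real_derivative
      (\<Sum>j=2..J. if j = 2 then - (q * lam j) else 0)) (at 0)"
  proof (rule DERIV_sum)
    fix j :: nat assume "j \<in> {2..J}"
    then show "((\<lambda>p. lam j * (1 - q * p ^ (j - 1))) has_real_derivative
        (if j = 2 then - (q * lam j) else 0)) (at 0)"
      by (auto intro!: derivative_eq_intros simp: numeral_2_eq_2)
  qed
  moreover have "(\<Sum>j=2..J. if j = 2 then - (q * lam j) else 0) = - (q * lam 2)"
    using assms by (auto simp: sum.delta)
  ultimately show ?thesis by simp
qed

lemma IEV_ens_has_derivative_at_0:
  assumes lamr_supp: "\<forall>j. j \<notin> {2..Jv} \<longrightarrow> lamr j = 0"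
    and V_codes: "\<forall>i<NV. is_gen_matrix (kV i) (nV i) (GV i)"
    and V_dmin: "\<forall>i<NV. 2 \<le> dmin (kV i) (nV i) (GV i)"
  shows "((\<lambda>p. IEV_ens Jv lamr NV nV kV GV lamV p q) has_real_derivative
    - (q * lamr 2 +
       (\<Sum>i\<in>{i. i < NV \<and> dmin (kV i) (nV i) (GV i) = 2}. \<Sum>z\<le>kV i.
          q ^ z * (1 - q) ^ (kV i - z) * (2 * lamV i / real (nV i))
          * DeltaV (kV i) (nV i) (GV i) (nV i - 2) (kV i - z)))) (at 0)"
proof -
  define slope where "slope i = (\<Sum>z\<le>kV i. q ^ z * (1 - q) ^ (kV i - z) * (2 / real (nV i))
      * DeltaV (kV i) (nV i) (GV i) (nV i - 2) (kV i - z))" for i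
  have "((\<lambda>p. IEV_ens Jv lamr NV nV kV GV lamV p q) has_real_derivative
      - (q * lamr 2) + (\<Sum>i<NV. lamV i * - slope i)) (at 0)"
    unfolding IEV_ens_def slope_def using V_codes V_dmin
    by (intro DERIV_add DERIV_repetition_part_at_0[OF lamr_supp] DERIV_sum DERIV_cmult
        IEV_code_has_derivative_at_0) auto
  moreover have "slope i = 0" if "i < NV" "dmin (kV i) (nV i) (GV i) \<noteq> 2" for i
  proof -
    have "3 \<le> dmin (kV i) (nV i) (GV i)" using that V_dmin by force
    then have "DeltaV (kV i) (nV i) (GV i) (nV i - 2) h = 0" for h
      using that V_codes by (intro DeltaV_eq_0) auto
    then show ?thesis unfolding slope_def by simp
  qed
  then have "(\<Sum>i<NV. lamV i * slope i) =
      (\<Sum>i\<in>{i. i < NV \<and> dmin (kV i) (nV i) (GV i) = 2}. lamV i * slope i)"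
    by (intro sum.mono_neutral_right) auto
  ultimately show ?thesis
    unfolding slope_def by (simp add: sum_negf sum_distrib_left mult_ac)
qed

lemma D_C_eq_rho_SPC_deriv:
  "\<forall>i<NC. 3 \<le> dmin (kC i) (nC i) (GC i) \<Longrightarrow> D_C Jc rhoS NC nC kC GC rhoC = rho_SPC_deriv Jc rhoS"
  unfolding D_C_def by (force intro: sum.neutral)

lemma mult_le_inverse_iff:
  fixes x l d :: "'a::linordered_field"
  assumes "0 < l" "0 < d"
  shows "x * l \<le> inverse d \<longleftrightarrow> x \<le> inverse (l * d)"
  using assms by (simp add: inverse_eq_divide field_simps)

lemma mult_eq_inverse_iff:
  fixes x l d :: "'a::field"
  assumes "l \<noteq> 0" "d \<noteq> 0"
  shows "x * l = inverse d \<longleftrightarrow> x = inverse (l * d)"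
  using assms by (simp add: inverse_eq_divide field_simps)

theorem mainTheorem8:
  fixes Jv Jc NV NC :: nat
    and lamr rhoS lamV rhoC :: "nat \<Rightarrow> real"
    and nV kV nC kC :: "nat \<Rightarrow> nat"
    and GV GC :: "nat \<Rightarrow> nat \<Rightarrow> nat \<Rightarrow> bool"
    and q :: real
  assumes q_range: "0 \<le> q" "q \<le> 1"
    and lamr_nonneg: "\<forall>j\<in>{2..Jv}. 0 \<le> lamr j"
    and lamr_supp: "\<forall>j. j \<notin> {2..Jv} \<longrightarrow> lamr j = 0"
    and lamV_nonneg: "\<forall>i<NV. 0 \<le> lamV i"
    and lam_sum: "(\<Sum>j=2..Jv. lamr j) + (\<Sum>i<NV. lamV i) = 1"
    and rhoS_nonneg: "\<forall>j\<in>{2..Jc}. 0 \<le> rhoS j"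
    and rhoS_supp: "\<forall>j. j \<notin> {2..Jc} \<longrightarrow> rhoS j = 0"
    and rhoC_nonneg: "\<forall>i<NC. 0 \<le> rhoC i"
    and rho_sum: "(\<Sum>j=2..Jc. rhoS j) + (\<Sum>i<NC. rhoC i) = 1"
    and V_codes: "\<forall>i<NV. is_gen_matrix (kV i) (nV i) (GV i)"
    and V_dmin: "\<forall>i<NV. 2 \<le> dmin (kV i) (nV i) (GV i)"
    and C_codes: "\<forall>i<NC. is_gen_matrix (kC i) (nC i) (GC i)"
    and C_dmin: "\<forall>i<NC. 2 \<le> dmin (kC i) (nC i) (GC i)"
    and DC_pos: "D_C Jc rhoS NC nC kC GC rhoC > 0"
  shows
    "((\<lambda>p. IEV_ens Jv lamr NV nV kV GV lamV p q) has_real_derivative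
        - (q * lamr 2 +
           (\<Sum>i\<in>{i. i < NV \<and> dmin (kV i) (nV i) (GV i) = 2}. \<Sum>z\<le>kV i.
              q ^ z * (1 - q) ^ (kV i - z) * (2 * lamV i / real (nV i))
              * DeltaV (kV i) (nV i) (GV i) (nV i - 2) (kV i - z)))) (at 0)
   \<and> ((- deriv (\<lambda>p. IEV_ens Jv lamr NV nV kV GV lamV p q) 0
          \<le> inverse (D_C Jc rhoS NC nC kC GC rhoC))
      \<longleftrightarrow>
      (q * lamr 2 +
           (\<Sum>i\<in>{i. i < NV \<and> dmin (kV i) (nV i) (GV i) = 2}. \<Sum>z\<le>kV i.
              q ^ z * (1 - q) ^ (kV i - z)
              * (2 * lamV i * DeltaV (kV i) (nV i) (GV i) (nV i - 2) (kV i - z)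
                 / real (nV i)))
       \<le> inverse (rho_SPC_deriv Jc rhoS +
           (\<Sum>i\<in>{i. i < NC \<and> dmin (kC i) (nC i) (GC i) = 2}.
              2 * rhoC i / real (nC i) * DeltaC (kC i) (nC i) (GC i) (nC i - 2)))))
   \<and> ((\<forall>i<NV. 3 \<le> dmin (kV i) (nV i) (GV i)) \<and> 0 < lamr 2 \<longrightarrow>
        ((- deriv (\<lambda>p. IEV_ens Jv lamr NV nV kV GV lamV p q) 0
            \<le> inverse (D_C Jc rhoS NC nC kC GC rhoC))
         \<longleftrightarrow> q \<le> inverse (lamr 2 * D_C Jc rhoS NC nC kC GC rhoC))
      \<and> ((- deriv (\<lambda>p. IEV_ens Jv lamr NV nV kV GV lamV p q) 0
            = inverse (D_C Jc rhoS NC nC kC GC rhoC))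
         \<longleftrightarrow> q = inverse (lamr 2 * D_C Jc rhoS NC nC kC GC rhoC))
      \<and> ((\<forall>i<NC. 3 \<le> dmin (kC i) (nC i) (GC i)) \<longrightarrow>
          ((- deriv (\<lambda>p. IEV_ens Jv lamr NV nV kV GV lamV p q) 0
              \<le> inverse (D_C Jc rhoS NC nC kC GC rhoC))
           \<longleftrightarrow> q \<le> inverse (lamr 2 * rho_SPC_deriv Jc rhoS))))"
proof -
  let ?F = "\<lambda>p. IEV_ens Jv lamr NV nV kV GV lamV p q"
  let ?D2 = "{i. i < NV \<and> dmin (kV i) (nV i) (GV i) = 2}"
  note deriv_F = IEV_ens_has_derivative_at_0[OF lamr_supp V_codes V_dmin, of lamV q]
  have slope: "- deriv ?F 0 = q * lamr 2 + (\<Sum>i\<in>?D2. \<Sum>z\<le>kV i.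
      q ^ z * (1 - q) ^ (kV i - z)
      * (2 * lamV i * DeltaV (kV i) (nV i) (GV i) (nV i - 2) (kV i - z) / real (nV i)))"
    using DERIV_imp_deriv[OF deriv_F] by (simp add: mult.assoc)
  show ?thesis
  proof (intro conjI impI)
    assume "(\<forall>i<NV. 3 \<le> dmin (kV i) (nV i) (GV i)) \<and> 0 < lamr 2"
    then have no_D2: "?D2 = {}" and "0 < lamr 2" by force+
    have slope_rep: "- deriv ?F 0 = q * lamr 2" unfolding slope no_D2 by simp
    then show "(- deriv ?F 0 \<le> inverse (D_C Jc rhoS NC nC kC GC rhoC)) \<longleftrightarrow>
        q \<le> inverse (lamr 2 * D_C Jc rhoS NC nC kC GC rhoC)"
      using \<open>0 < lamr 2\<close> DC_pos by (simp add: mult_le_inverse_iff)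
    show "(- deriv ?F 0 = inverse (D_C Jc rhoS NC nC kC GC rhoC)) \<longleftrightarrow>
        q = inverse (lamr 2 * D_C Jc rhoS NC nC kC GC rhoC)"
      using slope_rep \<open>0 < lamr 2\<close> DC_pos by (simp add: mult_eq_inverse_iff)
    assume "\<forall>i<NC. 3 \<le> dmin (kC i) (nC i) (GC i)"
    then show "(- deriv ?F 0 \<le> inverse (D_C Jc rhoS NC nC kC GC rhoC)) \<longleftrightarrow>
        q \<le> inverse (lamr 2 * rho_SPC_deriv Jc rhoS)"
      using slope_rep \<open>0 < lamr 2\<close> DC_pos by (simp add: D_C_eq_rho_SPC_deriv mult_le_inverse_iff)
  qed (use deriv_F slope in \<open>simp_all add: D_C_def\<close>)
qed

end
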